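(* Let $L \geq 1$, $m = L+1$, $\gamma = (L+1)^3$, and for $i \in \{0,\ldots,L\}$ and $k \in [m]$ define $$w_i(k) = \gamma^{2(i+1)k - k^2 + 1} + \sum_{r=0}^L \gamma^{(2r+1)(i+1) - r^2 - r}, \qquad \pi_i(A_k) = \frac{w_i(k)}{\sum_{h=1}^m w_i(h)}.$$ Then for every $i \in \{0,\ldots,L\}$, $\pi_i(A_{i+1}) > 1 - \frac{1}{L+1}$, and for every $k \in [m]$ with $k \neq i+1$, $\frac{1}{2(L+1)^3} < \pi_i(A_k) < \frac{1}{(L+1)^2}$.
   Context: These numbers are the masses of the modes $A_k$ at level $i$ in the paper's construction of a multimodal target (with cross terms between well-separated modes neglected); here they are simply defined by the displayed formula. *)

theory Defs
  imports Complex_Main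
begin

definition w :: "nat \<Rightarrow> nat \<Rightarrow> nat \<Rightarrow> real" where
  "w L i k = (let \<gamma> = (real L + 1) ^ 3 in
     \<gamma> powi (2 * (int i + 1) * int k - (int k)\<^sup>2 + 1)
     + (\<Sum>r = 0..L. \<gamma> powi ((2 * int r + 1) * (int i + 1) - (int r)\<^sup>2 - int r)))"

definition pi_mass :: "nat \<Rightarrow> nat \<Rightarrow> nat \<Rightarrow> real" where
  "pi_mass L i k = w L i k / (\<Sum>h = 1..L+1. w L i h)"

end

(* Write n = i + 1. Every exponent in w_i(k) is n^2 plus a correction:
   2nk - k^2 + 1 = n^2 + 1 - (k - n)^2 and (2r + 1)n - r^2 - r = n^2 - (r - n)(r - n + 1).
   Cancelling gamma^(n^2), mode n gets weight gamma + c and every other mode a weight in (c, 1 + c],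
   where c = sum_r gamma^(-(r - n)(r - n + 1)) lies in [1, 9/4]: only r = n - 1 and r = n
   contribute terms of size 1. With m = L + 1 modes and gamma = m^3, the three bounds become
   polynomial inequalities in m >= 2 and c. *)

theory Submission
  imports Defs
begin

text \<open>Expanded around \<open>m = 2\<close>, each difference is a polynomial with nonnegative coefficients.\<close>

lemma peak_ratio_inequality:
  fixes m c :: real
  assumes "2 \<le> m" "c \<le> 9/4"
  shows "(m - 1)^2 * (1 + c) < m ^ 3 + c"
proof -
  define t where "t = m - 2"
  have "m ^ 3 + c - (m - 1)^2 * (1 + c) = t^3 + 11/4 * t^2 + 11/2 * t + 7 + (9/4 - c) * m * t"
    unfolding t_def by (simp add: field_simps power2_eq_square power3_eq_cube)
  moreover have "0 \<le> t" "0 \<le> (9/4 - c) * m * t"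
    using assms by (simp_all add: t_def)
  ultimately show ?thesis
    using zero_le_power[of t 2] zero_le_power[of t 3] by linarith
qed

lemma off_peak_ratio_lower_inequality:
  fixes m c :: real
  assumes "2 \<le> m" "1 \<le> c"
  shows "m ^ 3 + c + (m - 1) * (1 + c) < 2 * m ^ 3 * c"
proof -
  define t where "t = m - 2"
  have "2 * m ^ 3 * c - (m ^ 3 + c + (m - 1) * (1 + c))
      = t^3 + 6 * t^2 + 10 * t + 5 + (c - 1) * m * (2 * m^2 - 1)"
    unfolding t_def by (simp add: field_simps power2_eq_square power3_eq_cube)
  moreover have "0 \<le> t"
    using assms by (simp add: t_def)
  moreover have "1 \<le> m^2"
    using assms by (simp add: one_le_power)
  then have "0 \<le> (c - 1) * m * (2 * m^2 - 1)"
    using assms by (simp add: mult_nonneg_nonneg del: one_le_power)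
  ultimately show ?thesis
    using zero_le_power[of t 2] zero_le_power[of t 3] by linarith
qed

lemma off_peak_ratio_upper_inequality:
  fixes m c :: real
  assumes "2 \<le> m" "c \<le> 9/4"
  shows "(m^2 - 1) * (1 + c) < m ^ 3 + (m - 1) * c"
proof -
  define t where "t = m - 2"
  have "m ^ 3 + (m - 1) * c - (m^2 - 1) * (1 + c)
      = t^3 + 11/4 * t^2 + 5/4 * t + 1/2 + (9/4 - c) * m * (m - 1)"
    unfolding t_def by (simp add: field_simps power2_eq_square power3_eq_cube)
  moreover have "0 \<le> t" "0 \<le> (9/4 - c) * m * (m - 1)"
    using assms by (simp_all add: t_def)
  ultimately show ?thesis
    using zero_le_power[of t 2] zero_le_power[of t 3] by linarith
qed

locale peaked_weights =
  fixes A :: "'a set" and a :: 'a and x :: "'a \<Rightarrow> real" and c :: real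
  assumes finite_A: "finite A"
    and peak_in_A: "a \<in> A"
    and card_A_ge_2: "2 \<le> card A"
    and c_ge_1: "1 \<le> c"
    and c_le: "c \<le> 9/4"
    and x_peak: "x a = real (card A) ^ 3 + c"
    and x_off_peak: "h \<in> A - {a} \<Longrightarrow> c < x h \<and> x h \<le> 1 + c"
begin

lemma sum_split: "sum x A = x a + sum x (A - {a})"
  using finite_A peak_in_A by (rule sum.remove)

lemma card_off_peak: "real (card (A - {a})) = real (card A) - 1"
  using finite_A peak_in_A card_A_ge_2 by (simp add: of_nat_diff)

lemma off_peak_sum_le: "sum x (A - {a}) \<le> (real (card A) - 1) * (1 + c)"
  using sum_bounded_above[of "A - {a}" x "1 + c"] x_off_peak card_off_peak by auto

lemma off_peak_sum_ge:
  assumes "k \<in> A - {a}"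
  shows "x k + (real (card A) - 2) * c \<le> sum x (A - {a})"
proof -
  have "real (card (A - {a} - {k})) * c \<le> sum x (A - {a} - {k})"
    using x_off_peak by (intro sum_bounded_below) (auto intro: less_imp_le)
  moreover have "card (A - {a} - {k}) = card A - 2"
    using assms finite_A peak_in_A by simp
  then have "real (card (A - {a} - {k})) = real (card A) - 2"
    using card_A_ge_2 by (simp add: of_nat_diff)
  moreover have "sum x (A - {a}) = x k + sum x (A - {a} - {k})"
    using assms finite_A by (intro sum.remove) auto
  ultimately show ?thesis by simp
qed

lemma sum_pos: "0 < sum x A"
proof -
  have "0 \<le> sum x (A - {a})"
    using x_off_peak c_ge_1 by (intro sum_nonneg) (fastforce intro: order_trans[of _ c])
  moreover have "0 \<le> real (card A) ^ 3"
    by simp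
  ultimately show ?thesis
    using sum_split x_peak c_ge_1 by linarith
qed

lemma peak_mass_gt: "1 - 1 / real (card A) < x a / sum x A"
proof -
  define m where "m = real (card A)"
  have m2: "2 \<le> m"
    using card_A_ge_2 by (simp add: m_def)
  have "(m - 1) * sum x (A - {a}) \<le> (m - 1) * ((m - 1) * (1 + c))"
    using off_peak_sum_le m2 by (intro mult_left_mono) (simp_all add: m_def)
  also have "\<dots> < m ^ 3 + c"
    using peak_ratio_inequality[OF m2 c_le] by (simp add: power2_eq_square)
  finally have "(m - 1) * sum x (A - {a}) < x a"
    by (simp add: x_peak m_def)
  then show ?thesis
    using sum_split sum_pos m2 by (simp add: m_def field_simps)
qed

lemma off_peak_mass_gt:
  assumes "k \<in> A - {a}"
  shows "1 / (2 * real (card A) ^ 3) < x k / sum x A"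
proof -
  define m where "m = real (card A)"
  have m2: "2 \<le> m"
    using card_A_ge_2 by (simp add: m_def)
  have "sum x A \<le> m ^ 3 + c + (m - 1) * (1 + c)"
    using sum_split off_peak_sum_le x_peak by (simp add: m_def)
  also have "\<dots> < 2 * m ^ 3 * c"
    using off_peak_ratio_lower_inequality[OF m2 c_ge_1] .
  also have "\<dots> < 2 * m ^ 3 * x k"
    using x_off_peak[OF assms] m2 by simp
  finally show ?thesis
    using sum_pos m2 by (simp add: m_def field_simps)
qed

lemma off_peak_mass_lt:
  assumes "k \<in> A - {a}"
  shows "x k / sum x A < 1 / real (card A) ^ 2"
proof -
  define m where "m = real (card A)"
  have m2: "2 \<le> m"
    using card_A_ge_2 by (simp add: m_def)
  have "(m^2 - 1) * x k \<le> (m^2 - 1) * (1 + c)"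
    using x_off_peak[OF assms] m2 one_le_power[of m 2] by (intro mult_left_mono) auto
  also have "\<dots> < m ^ 3 + (m - 1) * c"
    using off_peak_ratio_upper_inequality[OF m2 c_le] .
  finally have "m^2 * x k < m ^ 3 + c + x k + (m - 2) * c"
    by (simp add: algebra_simps)
  also have "\<dots> \<le> sum x A"
    using sum_split off_peak_sum_ge[OF assms] x_peak by (simp add: m_def)
  finally show ?thesis
    using sum_pos m2 by (simp add: m_def field_simps)
qed

end

lemma pronic_ge_2:
  fixes d :: int
  assumes "d \<noteq> 0" "d \<noteq> 1"
  shows "2 \<le> d * (d - 1)"
proof (cases "2 \<le> d")
  case True
  then have "2 * 1 \<le> d * (d - 1)"
    by (intro mult_mono) auto
  then show ?thesis by simp
next
  case False
  with assms have "1 \<le> - d"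
    by simp
  then have "1 * 2 \<le> (- d) * (1 - d)"
    by (intro mult_mono) auto
  then show ?thesis by (simp add: algebra_simps)
qed

definition common_weight :: "real \<Rightarrow> nat \<Rightarrow> nat \<Rightarrow> real" where
  "common_weight g L i = (\<Sum>r = 0..L. g powi (- ((int r - int i) * (int r - int i - 1))))"

definition reduced_weight :: "real \<Rightarrow> nat \<Rightarrow> nat \<Rightarrow> nat \<Rightarrow> real" where
  "reduced_weight g L i k = g powi (1 - (int k - int i - 1)\<^sup>2) + common_weight g L i"

lemma w_eq_reduced_weight:
  "w L i k = ((real L + 1) ^ 3) powi ((int i + 1)\<^sup>2) * reduced_weight ((real L + 1) ^ 3) L i k"
proof -
  define g :: real where "g = (real L + 1) ^ 3"
  have powi_add: "g powi (a + b) = g powi a * g powi b" for a b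
    by (simp add: g_def power_int_add)
  have peak_exponent: "2 * (int i + 1) * int k - (int k)\<^sup>2 + 1
      = (int i + 1)\<^sup>2 + (1 - (int k - int i - 1)\<^sup>2)"
    by (simp add: power2_eq_square algebra_simps)
  have common_exponent: "(2 * int r + 1) * (int i + 1) - (int r)\<^sup>2 - int r
      = (int i + 1)\<^sup>2 + - ((int r - int i) * (int r - int i - 1))" for r
    by (simp add: power2_eq_square algebra_simps)
  show ?thesis
    unfolding w_def Let_def reduced_weight_def common_weight_def g_def[symmetric]
      peak_exponent common_exponent powi_add
    by (simp add: sum_distrib_left distrib_left)
qed

lemma pi_mass_eq_reduced_weight:
  "pi_mass L i k = reduced_weight ((real L + 1) ^ 3) L i k
     / (\<Sum>h = 1..L + 1. reduced_weight ((real L + 1) ^ 3) L i h)"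
  unfolding pi_mass_def w_eq_reduced_weight sum_distrib_left[symmetric] by simp

lemma common_weight_ge_1:
  assumes "0 < g" "i \<le> L"
  shows "1 \<le> common_weight g L i"
proof -
  have "g powi (- ((int i - int i) * (int i - int i - 1))) \<le> common_weight g L i"
    unfolding common_weight_def using assms by (intro member_le_sum) auto
  then show ?thesis by simp
qed

lemma common_weight_le:
  assumes "1 \<le> g"
  shows "common_weight g L i \<le> 2 + (real L + 1) / g\<^sup>2"
proof -
  have term_le: "g powi (- ((int r - int i) * (int r - int i - 1)))
      \<le> 1 / g\<^sup>2 + (if r = i then 1 else 0) + (if r = i + 1 then 1 else 0)" for r
  proof (cases "r = i \<or> r = i + 1")
    case True
    then show ?thesis using assms by auto
  next
    case False
    then have "2 \<le> (int r - int i) * (int r - int i - 1)"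
      by (intro pronic_ge_2) auto
    then have "g powi (- ((int r - int i) * (int r - int i - 1))) \<le> g powi (- 2)"
      using assms by (intro power_int_increasing) auto
    then show ?thesis
      using False by (simp add: power_int_minus divide_inverse)
  qed
  have "common_weight g L i
      \<le> (\<Sum>r = 0..L. 1 / g\<^sup>2 + (if r = i then 1 else 0) + (if r = i + 1 then 1 else 0))"
    unfolding common_weight_def by (intro sum_mono term_le)
  also have "\<dots> \<le> (real L + 1) / g\<^sup>2 + 1 + 1"
    by (simp add: sum.distrib ac_simps)
  finally show ?thesis by simp
qed

lemma common_weight_cube_le:
  assumes "1 \<le> L"
  shows "common_weight ((real L + 1) ^ 3) L i \<le> 9/4"
proof -
  define M :: real where "M = real L + 1"
  have "2 \<le> M"
    using assms by (simp add: M_def)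
  then have "2 ^ 5 \<le> M ^ 5"
    by (intro power_mono) auto
  have "M / (M ^ 3)\<^sup>2 = 1 / M ^ 5"
    using \<open>2 \<le> M\<close> by (simp add: eval_nat_numeral)
  also have "\<dots> \<le> 1 / 4"
    using \<open>2 ^ 5 \<le> M ^ 5\<close> \<open>2 \<le> M\<close> by (intro divide_left_mono) auto
  finally have "M / (M ^ 3)\<^sup>2 \<le> 1 / 4" .
  moreover have "1 \<le> M ^ 3"
    using \<open>2 \<le> M\<close> by (simp add: one_le_power)
  then have "common_weight (M ^ 3) L i \<le> 2 + M / (M ^ 3)\<^sup>2"
    unfolding M_def by (rule common_weight_le)
  ultimately show ?thesis
    unfolding M_def by linarith
qed

lemma reduced_weight_peak: "reduced_weight g L i (i + 1) = g + common_weight g L i"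
  by (simp add: reduced_weight_def)

lemma reduced_weight_off_peak:
  assumes "1 \<le> g" "k \<noteq> i + 1"
  shows "common_weight g L i < reduced_weight g L i k \<and> reduced_weight g L i k \<le> 1 + common_weight g L i"
proof -
  have "int k - int i - 1 \<noteq> 0"
    using assms(2) by simp
  then have "1 \<le> \<bar>int k - int i - 1\<bar> ^ 2"
    by (intro one_le_power) linarith
  then have "g powi (1 - (int k - int i - 1)\<^sup>2) \<le> g powi 0"
    using assms(1) by (intro power_int_increasing) auto
  moreover have "0 < g powi (1 - (int k - int i - 1)\<^sup>2)"
    using assms(1) by simp
  ultimately show ?thesis
    by (simp add: reduced_weight_def)
qed

theorem lemma11:
  fixes L :: nat
  assumes "L \<ge> 1"
  shows "\<forall>i \<in> {0..L}.
           pi_mass L i (i + 1) > 1 - 1 / (real L + 1) \<and>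
           (\<forall>k \<in> {1..L+1}. k \<noteq> i + 1 \<longrightarrow>
              1 / (2 * (real L + 1) ^ 3) < pi_mass L i k \<and>
              pi_mass L i k < 1 / (real L + 1) ^ 2)"
proof
  fix i
  assume "i \<in> {0..L}"
  define g :: real where "g = (real L + 1) ^ 3"
  have "1 \<le> g"
    by (simp add: g_def one_le_power)
  interpret peaked_weights "{1..L + 1}" "i + 1" "reduced_weight g L i" "common_weight g L i"
  proof
    show "1 \<le> common_weight g L i"
      using \<open>1 \<le> g\<close> \<open>i \<in> {0..L}\<close> by (intro common_weight_ge_1) auto
    show "common_weight g L i \<le> 9/4"
      unfolding g_def using assms by (rule common_weight_cube_le)
    show "reduced_weight g L i (i + 1) = real (card {1..L + 1}) ^ 3 + common_weight g L i"
      unfolding reduced_weight_peak by (simp add: g_def add.commute)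
    show "common_weight g L i < reduced_weight g L i h \<and> reduced_weight g L i h \<le> 1 + common_weight g L i"
      if "h \<in> {1..L + 1} - {i + 1}" for h
      using \<open>1 \<le> g\<close> that by (intro reduced_weight_off_peak) auto
  qed (use assms \<open>i \<in> {0..L}\<close> in auto)
  show "pi_mass L i (i + 1) > 1 - 1 / (real L + 1) \<and>
        (\<forall>k \<in> {1..L+1}. k \<noteq> i + 1 \<longrightarrow>
           1 / (2 * (real L + 1) ^ 3) < pi_mass L i k \<and>
           pi_mass L i k < 1 / (real L + 1) ^ 2)"
    using peak_mass_gt off_peak_mass_gt off_peak_mass_lt
    by (simp add: pi_mass_eq_reduced_weight g_def add.commute)
qed

end
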